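(* The following are equivalent. (i) For every $0<\delta\leq 1$ there exists a positive integer $N=\mathrm{DPHJ}(2,2,\delta)$ such that for every $n\geq N$, every subset $A\subseteq W(n,2,2)$ with $|A|\geq\delta\,2^{n^2}$ contains a polynomial combinatorial line of $W(n,2,2)$. (ii) $\lim_{n\to\infty}\Delta^\circ_n(\mathcal{C}^\circ)=0$; that is, every $\mathcal{C}^\circ$-HJ-code $\mathcal{G}\subseteq\mathbb{F}_2^{\binom{[n]}{\leq 2}}$ satisfies $\mathbb{P}[\mathcal{G}]=o_{n\to\infty}(1)$.
   Context: Polynomial words: $W(n,2,2)$ is the set of all maps $w\colon[n]^2\to\{1,2\}$ (it has $2^{n^2}$ elements). A polynomial variable word is a map $v\colon[n]^2\to\{1,2\}\cup\{x\}$ ($x$ a new symbol) such that $v^{-1}(\{x\})=X\times X$ for some nonempty $X\subseteq[n]$; $v(a)$ is obtained by replacing each occurrence of $x$ by $a$. A polynomial combinatorial line is a set $\{v(1),v(2)\}$ for a polynomial variable word $v$. Graphs: $\binom{V}{\leq 2}$ is the set of nonempty subsets of $V$ of size at most 2; a graph on $V$ is a subset of $\binom{V}{\leq 2}$. $V(G)$ is the union of the members of $G$; graphs $G,H$ are isomorphic if there is a bijection $\phi\colon V(G)\to V(H)$ with $\{x,y\}\in G\iff\{\phi(x),\phi(y)\}\in H$ for all $x,y\in V(G)$. Graphs on $[n]$ are identified with elements of $\mathbb{F}_2^{\binom{[n]}{\leq 2}}$; $G_1+G_2$ is symmetric difference; $\mathbb{P}$ is the uniform probability measure. $K_r^\circ=\binom{[r]}{\leq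 2}$, $\mathcal{C}^\circ=\{K_r^\circ:r\geq 1\}$. $\mathcal{G}$ is a $\mathcal{C}^\circ$-HJ-code if for all $G_1,G_2\in\mathcal{G}$ with $G_1\supseteq G_2$, $G_1+G_2$ is not isomorphic to any member of $\mathcal{C}^\circ$. $\Delta^\circ_n(\mathcal{C}^\circ)$ is the maximum of $\mathbb{P}[\mathcal{G}]$ over $\mathcal{C}^\circ$-HJ-codes $\mathcal{G}\subseteq\mathbb{F}_2^{\binom{[n]}{\leq 2}}$. *)

theory Defs
  imports "HOL-Analysis.Analysis"
begin

definition grid :: "nat \<Rightarrow> (nat \<times> nat) set" where
  "grid n = {1..n} \<times> {1..n}"

definition W22 :: "nat \<Rightarrow> ((nat \<times> nat) \<Rightarrow> nat) set" where
  "W22 n = PiE (grid n) (\<lambda>_. {1, 2})"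

text \<open>Polynomial variable word: values Some 1, Some 2, or None (the variable x);
  the set of positions carrying x is X \<times> X for a nonempty X \<subseteq> [n].\<close>
definition poly_var_word :: "nat \<Rightarrow> ((nat \<times> nat) \<Rightarrow> nat option) \<Rightarrow> bool" where
  "poly_var_word n v \<longleftrightarrow>
     v \<in> PiE (grid n) (\<lambda>_. {Some 1, Some 2, None}) \<and>
     (\<exists>X. X \<noteq> {} \<and> X \<subseteq> {1..n} \<and> {p \<in> grid n. v p = None} = X \<times> X)"

definition subst_word :: "nat \<Rightarrow> ((nat \<times> nat) \<Rightarrow> nat option) \<Rightarrow> nat \<Rightarrow> ((nat \<times> nat) \<Rightarrow> nat)" where
  "subst_word n v a = restrict (\<lambda>p. case v p of None \<Rightarrow> a | Some b \<Rightarrow> b) (grid n)"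

definition contains_poly_line :: "nat \<Rightarrow> ((nat \<times> nat) \<Rightarrow> nat) set \<Rightarrow> bool" where
  "contains_poly_line n A \<longleftrightarrow>
     (\<exists>v. poly_var_word n v \<and> subst_word n v 1 \<in> A \<and> subst_word n v 2 \<in> A)"

definition binom_le2 :: "'a set \<Rightarrow> 'a set set" where
  "binom_le2 V = {S. S \<subseteq> V \<and> S \<noteq> {} \<and> card S \<le> 2}"

definition vertices :: "'a set set \<Rightarrow> 'a set" where
  "vertices G = \<Union> G"

definition graph_iso :: "'a set set \<Rightarrow> 'b set set \<Rightarrow> bool" where
  "graph_iso G H \<longleftrightarrow> (\<exists>\<phi>. bij_betw \<phi> (vertices G) (vertices H) \<and>
     (\<forall>x\<in>vertices G. \<forall>y\<in>vertices G. {x, y} \<in> G \<longleftrightarrow> {\<phi> x, \<phi> y} \<in> H))"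

definition Kloop :: "nat \<Rightarrow> nat set set" where
  "Kloop r = binom_le2 {1..r}"

text \<open>Symmetric difference G1 + G2 in F_2^{binom([n],\<le>2)}.\<close>
definition gsum :: "'a set set \<Rightarrow> 'a set set \<Rightarrow> 'a set set" where
  "gsum G1 G2 = (G1 - G2) \<union> (G2 - G1)"

definition HJ_code :: "nat set set set \<Rightarrow> bool" where
  "HJ_code \<G> \<longleftrightarrow> (\<forall>G1\<in>\<G>. \<forall>G2\<in>\<G>. G2 \<subseteq> G1 \<longrightarrow>
      \<not> (\<exists>r\<ge>1. graph_iso (gsum G1 G2) (Kloop r)))"

definition graphs_on :: "nat \<Rightarrow> nat set set set" where
  "graphs_on n = Pow (binom_le2 {1..n})"

definition Pgraph :: "nat \<Rightarrow> nat set set set \<Rightarrow> real" where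
  "Pgraph n \<G> = real (card \<G>) / real (card (graphs_on n))"

definition Delta_circ :: "nat \<Rightarrow> real" where
  "Delta_circ n = Max {Pgraph n \<G> | \<G>. \<G> \<subseteq> graphs_on n \<and> HJ_code \<G>}"

end

theory Submission
  imports Defs
begin

(* Reading a graph on [n] off the upper triangle (diagonal included) of a word in W(n,2,2) turns
   a polynomial line with variable set X \<times> X into two graphs G2 \<subseteq> G1 with G1 - G2 = binom_le2 X, the looped clique on X;
   so the preimage of a C-HJ-code is a line-free set of the same density, which gives (i) \<Longrightarrow> (ii).
   Conversely, cut t consecutive blocks of length m out of [n] and sort the words by the first
   diagonal m \<times> m block on which they are symmetric. With everything outside that block fixed,
   the symmetric fillings of the block that lie in a line-free set A encode an HJ-code on [m], so
   they have density at most Delta_m; and the words symmetric on none of the t blocks have density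
   at most (1 - 2^(-m^2))^t. Hence A has density at most Delta_m + (1 - 2^(-m^2))^t. *)

section \<open>Fibres of finite function spaces\<close>

definition glue :: "'p set \<Rightarrow> ('p \<Rightarrow> 'v) \<Rightarrow> ('p \<Rightarrow> 'v) \<Rightarrow> 'p \<Rightarrow> 'v" where
  "glue D a b = (\<lambda>p. if p \<in> D then a p else b p)"

lemma glue_PiE:
  assumes "a \<in> PiE (I \<inter> D) F" "b \<in> PiE (I - D) F"
  shows "glue D a b \<in> PiE I F"
  using assms unfolding glue_def PiE_def Pi_def extensional_def by auto

lemma glue_restrict:
  assumes "w \<in> PiE I F"
  shows "glue D (restrict w (I \<inter> D)) (restrict w (I - D)) = w"
  using assms unfolding glue_def PiE_def extensional_def by (auto simp: fun_eq_iff)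

lemma glue_inject:
  assumes "a \<in> PiE (I \<inter> D) F" "a' \<in> PiE (I \<inter> D) F" "b \<in> PiE (I - D) F" "b' \<in> PiE (I - D) F"
    and "glue D a b = glue D a' b'"
  shows "a = a' \<and> b = b'"
proof
  show "a = a'"
  proof (rule PiE_ext[OF assms(1,2)])
    fix i assume "i \<in> I \<inter> D"
    then show "a i = a' i" using fun_cong[OF assms(5), of i] by (simp add: glue_def)
  qed
  show "b = b'"
  proof (rule PiE_ext[OF assms(3,4)])
    fix i assume "i \<in> I - D"
    then show "b i = b' i" using fun_cong[OF assms(5), of i] by (simp add: glue_def)
  qed
qed

lemma card_eq_sum_fibres:
  assumes fin: "finite I" "\<And>i. i \<in> I \<Longrightarrow> finite (F i)" and A: "A \<subseteq> PiE I F"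
  shows "card A = (\<Sum>b\<in>PiE (I - D) F. card {a \<in> PiE (I \<inter> D) F. glue D a b \<in> A})"
proof -
  let ?S = "SIGMA b:PiE (I - D) F. {a \<in> PiE (I \<inter> D) F. glue D a b \<in> A}"
  have "bij_betw (\<lambda>(b, a). glue D a b) ?S A"
  proof (rule bij_betw_imageI)
    show "inj_on (\<lambda>(b, a). glue D a b) ?S"
      by (rule inj_onI) (auto dest: glue_inject)
    have "w \<in> (\<lambda>(b, a). glue D a b) ` ?S" if "w \<in> A" for w
    proof -
      have "w \<in> PiE I F" using A that by blast
      then show ?thesis
        using glue_restrict[of w I F D] that
        by (intro image_eqI[of _ _ "(restrict w (I - D), restrict w (I \<inter> D))"])
           (auto simp: restrict_PiE_iff PiE_mem)
    qed
    then show "(\<lambda>(b, a). glue D a b) ` ?S = A" by auto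
  qed
  then have "card A = card ?S" by (simp add: bij_betw_same_card)
  also have "\<dots> = (\<Sum>b\<in>PiE (I - D) F. card {a \<in> PiE (I \<inter> D) F. glue D a b \<in> A})"
  proof (rule card_SigmaI)
    have "finite (PiE (I \<inter> D) F)" "finite (PiE (I - D) F)"
      using fin by (auto intro!: finite_PiE)
    then show "finite (PiE (I - D) F)" "\<forall>b\<in>PiE (I - D) F. finite {a \<in> PiE (I \<inter> D) F. glue D a b \<in> A}"
      by auto
  qed
  finally show ?thesis .
qed

lemma card_le_by_fibres:
  fixes d :: real
  assumes fin: "finite I" "\<And>i. i \<in> I \<Longrightarrow> finite (F i)"
    and "A \<subseteq> PiE I F" "T \<subseteq> PiE I F"
    and fibres: "\<And>b. b \<in> PiE (I - D) F \<Longrightarrow>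
      card {a \<in> PiE (I \<inter> D) F. glue D a b \<in> A} \<le> d * card {a \<in> PiE (I \<inter> D) F. glue D a b \<in> T}"
  shows "card A \<le> d * card T"
proof -
  have "real (card A) = (\<Sum>b\<in>PiE (I - D) F. real (card {a \<in> PiE (I \<inter> D) F. glue D a b \<in> A}))"
    using card_eq_sum_fibres[OF fin \<open>A \<subseteq> PiE I F\<close>, of D] by simp
  also have "\<dots> \<le> (\<Sum>b\<in>PiE (I - D) F. d * card {a \<in> PiE (I \<inter> D) F. glue D a b \<in> T})"
    by (rule sum_mono) (rule fibres)
  also have "\<dots> = d * card T"
    using card_eq_sum_fibres[OF fin \<open>T \<subseteq> PiE I F\<close>, of D] by (simp add: sum_distrib_left)
  finally show ?thesis .
qed

lemma card_preimage_bij: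
  assumes "bij_betw f S T" "B \<subseteq> T"
  shows "card {a \<in> S. f a \<in> B} = card B"
proof -
  have "bij_betw f {a \<in> S. f a \<in> B} B"
    using assms unfolding bij_betw_def by (auto intro: inj_on_subset)
  then show ?thesis by (rule bij_betw_same_card)
qed

section \<open>Graphs and HJ-codes\<close>

lemma mem_binom_le2_iff:
  assumes "finite V"
  shows "S \<in> binom_le2 V \<longleftrightarrow> (\<exists>x\<in>V. \<exists>y\<in>V. S = {x, y})"
proof
  assume S: "S \<in> binom_le2 V"
  then have "finite S" "S \<noteq> {}" "card S \<le> 2" "S \<subseteq> V"
    using assms unfolding binom_le2_def by (auto intro: finite_subset)
  then have "card S = 1 \<or> card S = 2"
    by (metis One_nat_def card_0_eq le_Suc_eq numeral_2_eq_2 le_zero_eq)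
  then show "\<exists>x\<in>V. \<exists>y\<in>V. S = {x, y}"
    using \<open>S \<subseteq> V\<close> by (auto simp: card_1_singleton_iff card_2_iff)
next
  assume "\<exists>x\<in>V. \<exists>y\<in>V. S = {x, y}"
  then show "S \<in> binom_le2 V"
    unfolding binom_le2_def by (auto simp: card_insert_le_m1)
qed

lemma binom_le2_Min_Max:
  assumes "finite V" "S \<in> binom_le2 (V :: 'a :: linorder set)"
  shows "S = {Min S, Max S}" "Min S \<in> V" "Max S \<in> V" "Min S \<le> Max S"
  using assms by (auto simp: mem_binom_le2_iff min_def max_def)

lemma binom_le2_subset: "X \<subseteq> V \<Longrightarrow> binom_le2 X = {S \<in> binom_le2 V. S \<subseteq> X}"
  unfolding binom_le2_def by auto

lemma pair_mem_binom_le2_iff: "{x, y} \<in> binom_le2 X \<longleftrightarrow> x \<in> X \<and> y \<in> X"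
  unfolding binom_le2_def by (auto simp: card_insert_le_m1)

lemma vertices_binom_le2: "vertices (binom_le2 X) = X"
proof -
  have "{x} \<in> binom_le2 X" if "x \<in> X" for x
    using pair_mem_binom_le2_iff[of x x X] that by simp
  then show ?thesis unfolding vertices_def binom_le2_def by blast
qed

lemma graph_iso_Kloop_imp_complete:
  assumes U: "finite U" and G: "G \<subseteq> binom_le2 U" and iso: "graph_iso G (Kloop r)" and "r \<ge> 1"
  shows "vertices G \<noteq> {} \<and> vertices G \<subseteq> U \<and> G = binom_le2 (vertices G)"
proof -
  obtain \<phi> where \<phi>: "bij_betw \<phi> (vertices G) {1..r}"
    and edges: "\<forall>x\<in>vertices G. \<forall>y\<in>vertices G. {x, y} \<in> G \<longleftrightarrow> {\<phi> x, \<phi> y} \<in> Kloop r"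
    using iso unfolding graph_iso_def Kloop_def vertices_binom_le2 by blast
  let ?X = "vertices G"
  have XU: "?X \<subseteq> U" using G unfolding vertices_def binom_le2_def by auto
  have "?X \<noteq> {}" using \<phi> \<open>r \<ge> 1\<close> unfolding bij_betw_def by auto
  moreover have "G = binom_le2 ?X"
  proof
    show "G \<subseteq> binom_le2 ?X"
    proof
      fix S assume "S \<in> G"
      with G have "S \<in> binom_le2 U" by blast
      then obtain x y where "S = {x, y}" unfolding mem_binom_le2_iff[OF U] by blast
      moreover have "x \<in> ?X" "y \<in> ?X"
        using \<open>S \<in> G\<close> \<open>S = {x, y}\<close> unfolding vertices_def by auto
      ultimately show "S \<in> binom_le2 ?X" by (simp add: pair_mem_binom_le2_iff)
    qed
    have "{x, y} \<in> G" if "x \<in> ?X" "y \<in> ?X" for x y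
    proof -
      have "{\<phi> x, \<phi> y} \<in> Kloop r"
        using that bij_betwE[OF \<phi>] unfolding Kloop_def pair_mem_binom_le2_iff by blast
      then show ?thesis using edges that by blast
    qed
    moreover have "finite ?X" using XU U by (rule finite_subset)
    ultimately show "binom_le2 ?X \<subseteq> G"
      unfolding mem_binom_le2_iff[OF \<open>finite ?X\<close>] subset_iff by blast
  qed
  ultimately show ?thesis using XU by blast
qed

lemma graph_iso_binom_le2_Kloop:
  assumes "finite X"
  shows "graph_iso (binom_le2 X) (Kloop (card X))"
proof -
  obtain h where h: "bij_betw h X {1..card X}"
    using finite_same_card_bij[OF assms, of "{1..card X}"] by auto
  then have "{x, y} \<in> binom_le2 X" "{h x, h y} \<in> Kloop (card X)" if "x \<in> X" "y \<in> X" for x y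
    using that bij_betwE[OF h] unfolding Kloop_def pair_mem_binom_le2_iff by blast+
  with h show ?thesis
    unfolding graph_iso_def Kloop_def vertices_binom_le2 by (intro exI[of _ h]) simp
qed

lemma graph_iso_Kloop_iff:
  assumes U: "finite U" and G: "G \<subseteq> binom_le2 U"
  shows "(\<exists>r\<ge>1. graph_iso G (Kloop r)) \<longleftrightarrow> (\<exists>X. X \<noteq> {} \<and> X \<subseteq> U \<and> G = binom_le2 X)"
proof
  assume "\<exists>r\<ge>1. graph_iso G (Kloop r)"
  then obtain r where "r \<ge> 1" "graph_iso G (Kloop r)" by blast
  then show "\<exists>X. X \<noteq> {} \<and> X \<subseteq> U \<and> G = binom_le2 X"
    using graph_iso_Kloop_imp_complete[OF U G] by (intro exI[of _ "vertices G"]) simp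
next
  assume "\<exists>X. X \<noteq> {} \<and> X \<subseteq> U \<and> G = binom_le2 X"
  then obtain X where X: "X \<noteq> {}" "X \<subseteq> U" and GX: "G = binom_le2 X" by blast
  with U have "finite X" by (blast intro: finite_subset)
  with X have "card X \<ge> 1" by (simp add: Suc_le_eq card_gt_0_iff)
  with graph_iso_binom_le2_Kloop[OF \<open>finite X\<close>] show "\<exists>r\<ge>1. graph_iso G (Kloop r)"
    unfolding GX by (intro exI[of _ "card X"]) simp
qed

lemma HJ_code_iff:
  assumes "\<G> \<subseteq> graphs_on m"
  shows "HJ_code \<G> \<longleftrightarrow> (\<forall>G1\<in>\<G>. \<forall>G2\<in>\<G>. G2 \<subseteq> G1 \<longrightarrow>
           (\<forall>X. X \<noteq> {} \<longrightarrow> X \<subseteq> {1..m} \<longrightarrow> G1 - G2 \<noteq> binom_le2 X))"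
proof -
  have "(\<exists>r\<ge>1. graph_iso (gsum G1 G2) (Kloop r)) \<longleftrightarrow>
      (\<exists>X. X \<noteq> {} \<and> X \<subseteq> {1..m} \<and> G1 - G2 = binom_le2 X)"
    if "G1 \<in> \<G>" "G2 \<subseteq> G1" for G1 G2
  proof -
    have "gsum G1 G2 = G1 - G2" using that unfolding gsum_def by auto
    moreover have "G1 - G2 \<subseteq> binom_le2 {1..m}" using that assms unfolding graphs_on_def by auto
    ultimately show ?thesis using graph_iso_Kloop_iff[of "{1..m}"] by simp
  qed
  then show ?thesis unfolding HJ_code_def by simp blast
qed

lemma finite_graphs_on: "finite (graphs_on n)"
  unfolding graphs_on_def binom_le2_def by auto

lemma card_graphs_on_pos: "card (graphs_on n) > 0"
  using finite_graphs_on by (auto simp: card_gt_0_iff graphs_on_def)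

lemma finite_HJ_code_densities: "finite {Pgraph n \<G> | \<G>. \<G> \<subseteq> graphs_on n \<and> HJ_code \<G>}"
proof -
  have "{Pgraph n \<G> | \<G>. \<G> \<subseteq> graphs_on n \<and> HJ_code \<G>} \<subseteq> Pgraph n ` Pow (graphs_on n)"
    by auto
  then show ?thesis using finite_graphs_on by (auto intro: finite_subset)
qed

lemma Pgraph_le_Delta_circ: "\<G> \<subseteq> graphs_on n \<Longrightarrow> HJ_code \<G> \<Longrightarrow> Pgraph n \<G> \<le> Delta_circ n"
  unfolding Delta_circ_def by (rule Max_ge[OF finite_HJ_code_densities]) blast

lemma HJ_code_empty: "HJ_code {}"
  unfolding HJ_code_def by simp

lemma card_HJ_code_le:
  assumes "\<G> \<subseteq> graphs_on n" "HJ_code \<G>"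
  shows "card \<G> \<le> Delta_circ n * card (graphs_on n)"
  using Pgraph_le_Delta_circ[OF assms] card_graphs_on_pos[of n]
  by (simp add: Pgraph_def pos_divide_le_eq)

lemma Delta_circ_nonneg: "0 \<le> Delta_circ n"
  using Pgraph_le_Delta_circ[OF empty_subsetI HJ_code_empty] by (simp add: Pgraph_def)

lemma Delta_circ_attained:
  obtains \<G> where "\<G> \<subseteq> graphs_on n" "HJ_code \<G>" "Delta_circ n = Pgraph n \<G>"
proof -
  have "Delta_circ n \<in> {Pgraph n \<G> | \<G>. \<G> \<subseteq> graphs_on n \<and> HJ_code \<G>}"
    unfolding Delta_circ_def using HJ_code_empty
    by (intro Max_in[OF finite_HJ_code_densities]) blast
  then show thesis using that by blast
qed

lemma contains_poly_lineE:
  assumes "contains_poly_line n A"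
  obtains w1 w2 X where "w1 \<in> A" "w2 \<in> A" "X \<noteq> {}" "X \<subseteq> {1..n}"
    "\<And>p. p \<in> X \<times> X \<Longrightarrow> w1 p = 1 \<and> w2 p = 2" "\<And>p. p \<notin> X \<times> X \<Longrightarrow> w1 p = w2 p"
proof -
  obtain v where "poly_var_word n v" and A: "subst_word n v 1 \<in> A" "subst_word n v 2 \<in> A"
    using assms unfolding contains_poly_line_def by blast
  then obtain X where X: "X \<noteq> {}" "X \<subseteq> {1..n}" and v: "{p \<in> grid n. v p = None} = X \<times> X"
    unfolding poly_var_word_def by blast
  have "X \<times> X \<subseteq> grid n" using X(2) unfolding grid_def by auto
  with v have var: "p \<in> grid n \<and> v p = None \<longleftrightarrow> p \<in> X \<times> X" for p by auto
  show thesis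
  proof (rule that[OF A X])
    fix p
    show "subst_word n v 1 p = 1 \<and> subst_word n v 2 p = 2" if "p \<in> X \<times> X"
      using var[of p] that by (simp add: subst_word_def)
    show "subst_word n v 1 p = subst_word n v 2 p" if "p \<notin> X \<times> X"
    proof (cases "p \<in> grid n")
      case True
      with var[of p] that obtain c where "v p = Some c" by auto
      with True show ?thesis by (simp add: subst_word_def)
    qed (simp add: subst_word_def)
  qed
qed

lemma contains_poly_lineI:
  assumes "w1 \<in> A" "w2 \<in> A" "w1 \<in> W22 n" "X \<noteq> {}" "X \<subseteq> {1..n}"
    and line: "\<And>p. p \<in> X \<times> X \<Longrightarrow> w1 p = 1 \<and> w2 p = 2" "\<And>p. p \<notin> X \<times> X \<Longrightarrow> w1 p = w2 p"
  shows "contains_poly_line n A"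
proof -
  define v where "v = restrict (\<lambda>p. if p \<in> X \<times> X then None else Some (w1 p)) (grid n)"
  have XX: "X \<times> X \<subseteq> grid n" using assms(5) unfolding grid_def by auto
  have w1: "w1 \<in> PiE (grid n) (\<lambda>_. {1, 2})"
    using assms(3) unfolding W22_def .
  have "poly_var_word n v"
    unfolding poly_var_word_def
  proof (intro conjI exI)
    show "v \<in> PiE (grid n) (\<lambda>_. {Some 1, Some 2, None})"
      using PiE_mem[OF w1] by (auto simp: v_def)
    show "{p \<in> grid n. v p = None} = X \<times> X"
      using XX by (auto simp: v_def)
  qed (use assms(4,5) in auto)
  moreover have "subst_word n v a p = (if p \<in> X \<times> X then a else w1 p)" for a p
  proof (cases "p \<in> grid n")
    case False
    with XX show ?thesis by (auto simp: subst_word_def PiE_arb[OF w1])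
  qed (simp add: subst_word_def v_def)
  then have "subst_word n v 1 = w1" "subst_word n v 2 = w2"
    using line by (auto simp: fun_eq_iff)
  ultimately show ?thesis using assms(1,2) unfolding contains_poly_line_def by blast
qed

section \<open>Graphs encoded in diagonal blocks\<close>

definition block :: "nat \<Rightarrow> nat \<Rightarrow> nat set" where
  "block m k = {k * m + 1 .. k * m + m}"

definition upper_triangle :: "nat \<Rightarrow> nat \<Rightarrow> (nat \<times> nat) set" where
  "upper_triangle m k = {(i, j) \<in> block m k \<times> block m k. i \<le> j}"

definition upper_graph :: "nat \<Rightarrow> nat \<Rightarrow> (nat \<times> nat \<Rightarrow> nat) \<Rightarrow> nat set set" where
  "upper_graph m k w = {S \<in> binom_le2 {1..m}. w (Min S + k * m, Max S + k * m) = 1}"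

definition symmetric_on :: "('a \<times> 'a) set \<Rightarrow> ('a \<times> 'a \<Rightarrow> 'b) \<Rightarrow> bool" where
  "symmetric_on D w \<longleftrightarrow> (\<forall>i j. (i, j) \<in> D \<longrightarrow> (j, i) \<in> D \<longrightarrow> w (i, j) = w (j, i))"

lemma block_eq_image: "block m k = (\<lambda>x. x + k * m) ` {1..m}"
  unfolding block_def by (simp add: add.commute)

lemma upper_graph_in_graphs_on: "upper_graph m k w \<in> graphs_on m"
  unfolding upper_graph_def graphs_on_def by auto

lemma Min_Max_in_upper_triangle:
  assumes "S \<in> binom_le2 {1..m}"
  shows "(Min S + k * m, Max S + k * m) \<in> upper_triangle m k"
  using binom_le2_Min_Max(2-4)[OF finite_atLeastAtMost assms]
  by (auto simp: upper_triangle_def block_def)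

lemma mem_upper_graph_iff:
  assumes "x \<in> {1..m}" "y \<in> {1..m}"
  shows "{x, y} \<in> upper_graph m k w \<longleftrightarrow> w (min x y + k * m, max x y + k * m) = 1"
proof -
  have "{x, y} \<in> binom_le2 {1..m}"
    using assms by (simp add: pair_mem_binom_le2_iff)
  then show ?thesis unfolding upper_graph_def by simp
qed

lemma upper_graph_cong:
  assumes "\<And>p. p \<in> upper_triangle m k \<Longrightarrow> w p = w' p"
  shows "upper_graph m k w = upper_graph m k w'"
proof -
  have "w (Min S + k * m, Max S + k * m) = w' (Min S + k * m, Max S + k * m)"
    if "S \<in> binom_le2 {1..m}" for S
    using assms[OF Min_Max_in_upper_triangle[OF that]] .
  then show ?thesis unfolding upper_graph_def by (intro Collect_cong) auto
qed

lemma symmetric_on_cong: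
  assumes "\<And>p. p \<in> D \<Longrightarrow> w p = w' p"
  shows "symmetric_on D w = symmetric_on D w'"
  using assms unfolding symmetric_on_def by metis

lemma symmetric_on_min_max:
  assumes "symmetric_on D w" "(i, j) \<in> D" "(min i j, max i j) \<in> D"
  shows "w (i, j) = w (min i j, max i j)"
  using assms unfolding symmetric_on_def by (cases "i \<le> j") (auto simp: min_def max_def)

lemma mem_upper_graph_iff_symmetric:
  assumes "symmetric_on (block m k \<times> block m k) w" "x \<in> {1..m}" "y \<in> {1..m}"
  shows "{x, y} \<in> upper_graph m k w \<longleftrightarrow> w (x + k * m, y + k * m) = 1"
proof -
  have "(x + k * m, y + k * m) \<in> block m k \<times> block m k"
       "(min x y + k * m, max x y + k * m) \<in> block m k \<times> block m k"
    using assms(2,3) by (auto simp: block_def min_def max_def)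
  then have "w (x + k * m, y + k * m) = w (min x y + k * m, max x y + k * m)"
    using symmetric_on_min_max[OF assms(1), of "x + k * m" "y + k * m"]
    by (simp add: min_add_distrib_left max_add_distrib_left)
  then show ?thesis using mem_upper_graph_iff[OF assms(2,3)] by simp
qed

lemma inj_on_upper_graph:
  assumes "upper_triangle m k \<subseteq> D" "D \<subseteq> block m k \<times> block m k"
  shows "inj_on (upper_graph m k) {a \<in> PiE D (\<lambda>_. {1, 2::nat}). symmetric_on D a}"
    (is "inj_on _ ?S")
proof (rule inj_onI)
  fix a1 a2 assume a1: "a1 \<in> ?S" and a2: "a2 \<in> ?S" and eq: "upper_graph m k a1 = upper_graph m k a2"
  show "a1 = a2"
  proof (rule PiE_ext[of a1 D "\<lambda>_. {1, 2}" a2])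
    fix p assume "p \<in> D"
    with assms(2) obtain x y where xy: "x \<in> {1..m}" "y \<in> {1..m}" "p = (x + k * m, y + k * m)"
      unfolding block_eq_image by blast
    let ?q = "(min x y + k * m, max x y + k * m)"
    have "?q \<in> upper_triangle m k"
      using xy(1,2) by (auto simp: upper_triangle_def block_def min_def max_def)
    with assms(1) have q: "?q \<in> D" by blast
    have "a p = a ?q" if "a \<in> ?S" for a
      using symmetric_on_min_max[of D a "x + k * m" "y + k * m"] that q \<open>p \<in> D\<close> xy(3)
      by (simp add: min_add_distrib_left max_add_distrib_left)
    then have "a1 p = a1 ?q" "a2 p = a2 ?q" using a1 a2 by blast+
    moreover have "a1 ?q = 1 \<longleftrightarrow> a2 ?q = 1"
      using eq mem_upper_graph_iff[OF xy(1,2)] by metis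
    moreover have "a1 ?q \<in> {1, 2}" "a2 ?q \<in> {1, 2}"
      using a1 a2 q by (auto intro: PiE_mem)
    ultimately show "a1 p = a2 p" by auto
  qed (use a1 a2 in auto)
qed

lemma upper_graph_image:
  assumes "upper_triangle m k \<subseteq> D"
  shows "upper_graph m k ` {a \<in> PiE D (\<lambda>_. {1, 2::nat}). symmetric_on D a} = graphs_on m"
    (is "upper_graph m k ` ?S = _")
proof
  show "upper_graph m k ` ?S \<subseteq> graphs_on m"
    using upper_graph_in_graphs_on by blast
  show "graphs_on m \<subseteq> upper_graph m k ` ?S"
  proof
    fix G assume G: "G \<in> graphs_on m"
    define a where "a = restrict (\<lambda>(i, j). if {i - k * m, j - k * m} \<in> G then 1 else 2::nat) D"
    have "a \<in> ?S"
      unfolding a_def symmetric_on_def by (auto simp: insert_commute)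
    moreover have "upper_graph m k a = G"
    proof -
      have "a (Min S + k * m, Max S + k * m) = 1 \<longleftrightarrow> S \<in> G" if "S \<in> binom_le2 {1..m}" for S
        using Min_Max_in_upper_triangle[OF that] assms
          binom_le2_Min_Max(1)[OF finite_atLeastAtMost that, symmetric]
        unfolding a_def by auto
      then show ?thesis using G unfolding upper_graph_def graphs_on_def by auto
    qed
    ultimately show "G \<in> upper_graph m k ` ?S" by blast
  qed
qed

lemma upper_graph_bij:
  assumes "upper_triangle m k \<subseteq> D" "D \<subseteq> block m k \<times> block m k"
  shows "bij_betw (upper_graph m k) {a \<in> PiE D (\<lambda>_. {1, 2::nat}). symmetric_on D a} (graphs_on m)"
  using inj_on_upper_graph[OF assms] upper_graph_image[OF assms(1)] by (rule bij_betw_imageI)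

section \<open>Line-free sets from HJ-codes\<close>

lemma upper_graph_diff_of_line:
  assumes "X \<subseteq> {1..m}"
    and line: "\<And>p. p \<in> X \<times> X \<Longrightarrow> w1 p = 1 \<and> w2 p = 2" "\<And>p. p \<notin> X \<times> X \<Longrightarrow> w1 p = w2 p"
  shows "upper_graph m 0 w2 \<subseteq> upper_graph m 0 w1"
    and "upper_graph m 0 w1 - upper_graph m 0 w2 = binom_le2 X"
proof -
  have corner: "(Min S, Max S) \<in> X \<times> X \<longleftrightarrow> S \<subseteq> X" if "S \<in> binom_le2 {1..m}" for S
    using binom_le2_Min_Max(1)[OF finite_atLeastAtMost that]
    by (metis insert_subset mem_Sigma_iff empty_subsetI)
  have in_X: "w1 (Min S, Max S) = 1 \<and> w2 (Min S, Max S) = 2"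
    if "S \<in> binom_le2 {1..m}" "S \<subseteq> X" for S
    using line corner that by blast
  have off_X: "w1 (Min S, Max S) = w2 (Min S, Max S)"
    if "S \<in> binom_le2 {1..m}" "\<not> S \<subseteq> X" for S
    using line corner that by blast
  show "upper_graph m 0 w2 \<subseteq> upper_graph m 0 w1"
    unfolding upper_graph_def using in_X off_X by fastforce
  show "upper_graph m 0 w1 - upper_graph m 0 w2 = binom_le2 X"
    unfolding upper_graph_def binom_le2_subset[OF assms(1)] using in_X off_X by fastforce
qed

lemma line_free_preimage_of_HJ_code:
  assumes "\<G> \<subseteq> graphs_on n" "HJ_code \<G>"
  shows "\<not> contains_poly_line n {w \<in> W22 n. upper_graph n 0 w \<in> \<G>}"
proof
  assume "contains_poly_line n {w \<in> W22 n. upper_graph n 0 w \<in> \<G>}"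
  then obtain w1 w2 X where w: "upper_graph n 0 w1 \<in> \<G>" "upper_graph n 0 w2 \<in> \<G>"
    and X: "X \<noteq> {}" "X \<subseteq> {1..n}"
    and line: "\<And>p. p \<in> X \<times> X \<Longrightarrow> w1 p = 1 \<and> w2 p = 2" "\<And>p. p \<notin> X \<times> X \<Longrightarrow> w1 p = w2 p"
    by (rule contains_poly_lineE) blast
  have "upper_graph n 0 w1 - upper_graph n 0 w2 \<noteq> binom_le2 X"
    using assms(2) w X upper_graph_diff_of_line(1)[OF X(2) line]
    unfolding HJ_code_iff[OF assms(1)] by simp
  then show False using upper_graph_diff_of_line(2)[OF X(2) line] by contradiction
qed

lemma finite_grid: "finite (grid n)"
  unfolding grid_def by simp

lemma card_W22: "card (W22 n) = 2 ^ (n ^ 2)"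
proof -
  have "card (grid n) = n * n" unfolding grid_def by (simp add: card_cartesian_product)
  then show ?thesis
    unfolding W22_def by (simp add: card_PiE finite_grid power2_eq_square numeral_2_eq_2)
qed

lemma card_upper_graph_preimage:
  assumes "\<G> \<subseteq> graphs_on n"
  shows "card {w \<in> W22 n. upper_graph n 0 w \<in> \<G>}
    = card \<G> * card (PiE (grid n - upper_triangle n 0) (\<lambda>_. {1, 2::nat}))"
proof -
  let ?U = "upper_triangle n 0" and ?F = "\<lambda>_::nat \<times> nat. {1, 2::nat}"
  have U: "grid n \<inter> ?U = ?U"
    by (auto simp: grid_def upper_triangle_def block_def)
  have "symmetric_on ?U a" for a :: "nat \<times> nat \<Rightarrow> nat"
    by (auto simp: symmetric_on_def upper_triangle_def)
  moreover have "?U \<subseteq> block n 0 \<times> block n 0"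
    unfolding upper_triangle_def by blast
  ultimately have bij: "bij_betw (upper_graph n 0) (PiE ?U ?F) (graphs_on n)"
    using upper_graph_bij[of n 0 ?U] by simp
  have fibre: "{a \<in> PiE (grid n \<inter> ?U) ?F. glue ?U a b \<in> {w \<in> W22 n. upper_graph n 0 w \<in> \<G>}}
      = {a \<in> PiE ?U ?F. upper_graph n 0 a \<in> \<G>}" if "b \<in> PiE (grid n - ?U) ?F" for b
  proof -
    have "upper_graph n 0 (glue ?U a b) = upper_graph n 0 a" for a
      by (rule upper_graph_cong) (simp add: glue_def)
    moreover have "glue ?U a b \<in> W22 n" if "a \<in> PiE ?U ?F" for a
      unfolding W22_def using glue_PiE[of a "grid n" ?U ?F b] that \<open>b \<in> _\<close> U by simp
    ultimately show ?thesis using U by auto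
  qed
  have "card {w \<in> W22 n. upper_graph n 0 w \<in> \<G>} = (\<Sum>b\<in>PiE (grid n - ?U) ?F.
      card {a \<in> PiE (grid n \<inter> ?U) ?F. glue ?U a b \<in> {w \<in> W22 n. upper_graph n 0 w \<in> \<G>}})"
    by (rule card_eq_sum_fibres) (auto simp: finite_grid W22_def)
  also have "\<dots> = (\<Sum>b\<in>PiE (grid n - ?U) ?F. card {a \<in> PiE ?U ?F. upper_graph n 0 a \<in> \<G>})"
    by (rule sum.cong[OF refl]) (simp only: fibre)
  also have "\<dots> = card \<G> * card (PiE (grid n - ?U) ?F)"
    using card_preimage_bij[OF bij assms] by simp
  finally show ?thesis .
qed

lemma line_free_set_of_Delta_circ:
  obtains A where "A \<subseteq> W22 n" "\<not> contains_poly_line n A" "card A = Delta_circ n * 2 ^ (n ^ 2)"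
proof -
  obtain \<G> where \<G>: "\<G> \<subseteq> graphs_on n" "HJ_code \<G>" "Delta_circ n = Pgraph n \<G>"
    by (rule Delta_circ_attained)
  let ?A = "{w \<in> W22 n. upper_graph n 0 w \<in> \<G>}"
  let ?c = "card (PiE (grid n - upper_triangle n 0) (\<lambda>_. {1, 2::nat}))"
  have "{w \<in> W22 n. upper_graph n 0 w \<in> graphs_on n} = W22 n"
    using upper_graph_in_graphs_on by blast
  then have "2 ^ (n ^ 2) = card (graphs_on n) * ?c"
    using card_W22[of n] card_upper_graph_preimage[of "graphs_on n" n] by simp
  then have "real (2 ^ (n ^ 2)) = real (card (graphs_on n) * ?c)" by (rule arg_cong)
  then have total: "(2::real) ^ (n ^ 2) = real (card (graphs_on n)) * real ?c" by simp
  have "real (card ?A) = real (card \<G>) * real ?c"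
    using card_upper_graph_preimage[OF \<G>(1)] by simp
  also have "\<dots> = Pgraph n \<G> * (real (card (graphs_on n)) * real ?c)"
    using card_graphs_on_pos[of n] by (simp add: Pgraph_def)
  finally have "real (card ?A) = Delta_circ n * 2 ^ (n ^ 2)"
    using \<G>(3) total by simp
  with line_free_preimage_of_HJ_code[OF \<G>(1,2)] show thesis
    by (intro that[of ?A]) auto
qed

section \<open>Density of line-free sets\<close>

lemma block_subset_atLeastAtMost: "Suc k * m \<le> n \<Longrightarrow> block m k \<subseteq> {1..n}"
  unfolding block_def by auto

lemma block_disjoint: "l < k \<Longrightarrow> block m l \<inter> block m k = {}"
proof -
  assume "l < k"
  then have "l * m + m \<le> k * m"
    by (metis Suc_leI mult_Suc mult_le_mono1 add.commute)
  then show ?thesis unfolding block_def by auto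
qed

lemma finite_W22: "finite (W22 n)"
  unfolding W22_def by (auto intro!: finite_PiE simp: finite_grid)

text \<open>A line changes the entries (i, j) and (j, i) together, so only symmetric fillings of a
  diagonal block turn a clique difference of the encoded graphs into a line.\<close>

definition nonsym_words :: "nat \<Rightarrow> nat \<Rightarrow> nat \<Rightarrow> (nat \<times> nat \<Rightarrow> nat) set" where
  "nonsym_words n m k = {w \<in> W22 n. \<forall>l<k. \<not> symmetric_on (block m l \<times> block m l) w}"

definition first_sym_words :: "nat \<Rightarrow> nat \<Rightarrow> nat \<Rightarrow> (nat \<times> nat \<Rightarrow> nat) set" where
  "first_sym_words n m k = {w \<in> nonsym_words n m k. symmetric_on (block m k \<times> block m k) w}"

lemma nonsym_words_Suc: "nonsym_words n m (Suc k) = nonsym_words n m k - first_sym_words n m k"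
  unfolding nonsym_words_def first_sym_words_def by (auto simp: less_Suc_eq)

lemma first_sym_words_subset: "first_sym_words n m k \<subseteq> nonsym_words n m k"
  unfolding first_sym_words_def by blast

lemma glue_block_mem_iff:
  fixes a b :: "nat \<times> nat \<Rightarrow> nat" and m k :: nat
  defines "D \<equiv> block m k \<times> block m k"
  assumes k: "Suc k * m \<le> n" and a: "a \<in> PiE D (\<lambda>_. {1, 2})"
    and b: "b \<in> PiE (grid n - D) (\<lambda>_. {1, 2})"
  shows "glue D a b \<in> nonsym_words n m k \<longleftrightarrow> (\<forall>l<k. \<not> symmetric_on (block m l \<times> block m l) b)"
    and "glue D a b \<in> first_sym_words n m k \<longleftrightarrow>
      symmetric_on D a \<and> (\<forall>l<k. \<not> symmetric_on (block m l \<times> block m l) b)"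
proof -
  have "grid n \<inter> D = D"
    using block_subset_atLeastAtMost[OF k] unfolding D_def grid_def by auto
  then have "glue D a b \<in> W22 n"
    unfolding W22_def using glue_PiE[of a "grid n" D _ b] a b by simp
  moreover have "symmetric_on (block m l \<times> block m l) (glue D a b)
      = symmetric_on (block m l \<times> block m l) b" if "l < k" for l
    using block_disjoint[OF that] unfolding D_def
    by (intro symmetric_on_cong) (auto simp: glue_def)
  moreover have "symmetric_on D (glue D a b) = symmetric_on D a"
    by (intro symmetric_on_cong) (simp add: glue_def)
  ultimately show "glue D a b \<in> nonsym_words n m k \<longleftrightarrow> (\<forall>l<k. \<not> symmetric_on (block m l \<times> block m l) b)"
    and "glue D a b \<in> first_sym_words n m k \<longleftrightarrow>
      symmetric_on D a \<and> (\<forall>l<k. \<not> symmetric_on (block m l \<times> block m l) b)"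
    unfolding first_sym_words_def nonsym_words_def D_def by auto
qed

lemma card_nonsym_words_le_first_sym:
  assumes k: "Suc k * m \<le> n"
  shows "real (card (nonsym_words n m k)) \<le> 2 ^ (m * m) * real (card (first_sym_words n m k))"
proof -
  let ?D = "block m k \<times> block m k" and ?F = "\<lambda>_::nat \<times> nat. {1, 2::nat}"
  let ?Q = "\<lambda>b. \<forall>l<k. \<not> symmetric_on (block m l \<times> block m l) b"
  let ?Sym = "{a \<in> PiE ?D ?F. symmetric_on ?D a}"
  have DI: "grid n \<inter> ?D = ?D"
    using block_subset_atLeastAtMost[OF k] unfolding grid_def by auto
  have fin: "finite (PiE ?D ?F)" by (simp add: block_def finite_PiE)
  have card_PiE_D: "card (PiE ?D ?F) = 2 ^ (m * m)"
    by (simp add: card_PiE block_def card_cartesian_product numeral_2_eq_2)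
  have "restrict (\<lambda>_. 1) ?D \<in> ?Sym" by (simp add: symmetric_on_def)
  then have "?Sym \<noteq> {}" by blast
  with fin have Sym_pos: "card ?Sym \<ge> 1"
    by (simp add: Suc_le_eq card_gt_0_iff)
  show ?thesis
  proof (rule card_le_by_fibres[where I = "grid n" and F = ?F and D = ?D])
    show "nonsym_words n m k \<subseteq> PiE (grid n) ?F" "first_sym_words n m k \<subseteq> PiE (grid n) ?F"
      unfolding first_sym_words_def nonsym_words_def W22_def by auto
    fix b assume b: "b \<in> PiE (grid n - ?D) ?F"
    have "{a \<in> PiE (grid n \<inter> ?D) ?F. glue ?D a b \<in> nonsym_words n m k} = (if ?Q b then PiE ?D ?F else {})"
      using glue_block_mem_iff(1)[OF k _ b] DI by auto
    moreover have "{a \<in> PiE (grid n \<inter> ?D) ?F. glue ?D a b \<in> first_sym_words n m k} = (if ?Q b then ?Sym else {})"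
      using glue_block_mem_iff(2)[OF k _ b] DI by auto
    ultimately show "real (card {a \<in> PiE (grid n \<inter> ?D) ?F. glue ?D a b \<in> nonsym_words n m k})
      \<le> 2 ^ (m * m) * real (card {a \<in> PiE (grid n \<inter> ?D) ?F. glue ?D a b \<in> first_sym_words n m k})"
      using card_PiE_D Sym_pos by simp
  qed (simp_all add: finite_grid)
qed

lemma symmetric_block_values_of_upper_graph_diff:
  assumes a1: "a1 \<in> PiE (block m k \<times> block m k) (\<lambda>_. {1, 2::nat})" "symmetric_on (block m k \<times> block m k) a1"
    and a2: "a2 \<in> PiE (block m k \<times> block m k) (\<lambda>_. {1, 2::nat})" "symmetric_on (block m k \<times> block m k) a2"
    and sub: "upper_graph m k a2 \<subseteq> upper_graph m k a1"
    and diff: "upper_graph m k a1 - upper_graph m k a2 = binom_le2 X"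
    and xy: "x \<in> {1..m}" "y \<in> {1..m}"
  shows "x \<in> X \<and> y \<in> X \<Longrightarrow> a1 (x + k * m, y + k * m) = 1 \<and> a2 (x + k * m, y + k * m) = 2"
    and "\<not> (x \<in> X \<and> y \<in> X) \<Longrightarrow> a1 (x + k * m, y + k * m) = a2 (x + k * m, y + k * m)"
proof -
  let ?p = "(x + k * m, y + k * m)"
  have "?p \<in> block m k \<times> block m k"
    using xy by (auto simp: block_eq_image)
  then have val: "a1 ?p \<in> {1, 2}" "a2 ?p \<in> {1, 2}"
    using a1(1) a2(1) by (blast intro: PiE_mem)+
  have in_X: "{x, y} \<in> upper_graph m k a1 - upper_graph m k a2 \<longleftrightarrow> x \<in> X \<and> y \<in> X"
    by (simp add: diff pair_mem_binom_le2_iff)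
  note edge = mem_upper_graph_iff_symmetric[OF a1(2) xy] mem_upper_graph_iff_symmetric[OF a2(2) xy]
  show "a1 ?p = 1 \<and> a2 ?p = 2" if "x \<in> X \<and> y \<in> X"
    using that in_X edge val by auto
  show "a1 ?p = a2 ?p" if "\<not> (x \<in> X \<and> y \<in> X)"
  proof -
    have "a1 ?p = 1 \<longleftrightarrow> a2 ?p = 1"
      using that in_X edge sub by blast
    then show ?thesis using val by auto
  qed
qed

lemma contains_poly_line_of_glued_blocks:
  fixes a1 a2 b :: "nat \<times> nat \<Rightarrow> nat" and m k :: nat
  defines "D \<equiv> block m k \<times> block m k"
  assumes k: "Suc k * m \<le> n"
    and a1: "a1 \<in> PiE D (\<lambda>_. {1, 2})" "symmetric_on D a1" "glue D a1 b \<in> A"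
    and a2: "a2 \<in> PiE D (\<lambda>_. {1, 2})" "symmetric_on D a2" "glue D a2 b \<in> A"
    and b: "b \<in> PiE (grid n - D) (\<lambda>_. {1, 2})"
    and sub: "upper_graph m k a2 \<subseteq> upper_graph m k a1"
    and diff: "upper_graph m k a1 - upper_graph m k a2 = binom_le2 X"
    and X: "X \<noteq> {}" "X \<subseteq> {1..m}"
  shows "contains_poly_line n A"
proof -
  note block_values = symmetric_block_values_of_upper_graph_diff[OF a1(1,2)[unfolded D_def]
      a2(1,2)[unfolded D_def] sub diff]
  let ?X' = "(\<lambda>x. x + k * m) ` X"
  have X'_block: "?X' \<subseteq> block m k" using X(2) unfolding block_eq_image by blast
  then have X': "?X' \<noteq> {}" "?X' \<subseteq> {1..n}"
    using X(1) block_subset_atLeastAtMost[OF k] by auto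
  show ?thesis
  proof (rule contains_poly_lineI[OF a1(3) a2(3) _ X'])
    have "grid n \<inter> D = D"
      using block_subset_atLeastAtMost[OF k] unfolding D_def grid_def by auto
    then show "glue D a1 b \<in> W22 n"
      unfolding W22_def using glue_PiE[of a1 "grid n" D _ b] a1(1) b by simp
    fix p
    show "glue D a1 b p = 1 \<and> glue D a2 b p = 2" if p: "p \<in> ?X' \<times> ?X'"
    proof -
      obtain x y where xy: "x \<in> X" "y \<in> X" "p = (x + k * m, y + k * m)" using p by blast
      with X(2) have "x \<in> {1..m}" "y \<in> {1..m}" by auto
      moreover have "p \<in> D" using p X'_block unfolding D_def by blast
      ultimately show ?thesis using block_values(1) xy by (simp add: glue_def)
    qed
    show "glue D a1 b p = glue D a2 b p" if "p \<notin> ?X' \<times> ?X'"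
    proof (cases "p \<in> D")
      case True
      then obtain x y where "x \<in> {1..m}" "y \<in> {1..m}" "p = (x + k * m, y + k * m)"
        unfolding D_def block_eq_image by blast
      with that True block_values(2) show ?thesis by (auto simp: glue_def)
    qed (simp add: glue_def)
  qed
qed

lemma HJ_code_fibre:
  fixes b :: "nat \<times> nat \<Rightarrow> nat" and m k :: nat
  defines "D \<equiv> block m k \<times> block m k"
  assumes k: "Suc k * m \<le> n" and noline: "\<not> contains_poly_line n A"
    and b: "b \<in> PiE (grid n - D) (\<lambda>_. {1, 2})"
  shows "HJ_code (upper_graph m k ` {a \<in> PiE D (\<lambda>_. {1, 2}). symmetric_on D a \<and> glue D a b \<in> A})"
    (is "HJ_code (upper_graph m k ` ?\<A>)")
proof -
  have "G1 - G2 \<noteq> binom_le2 X"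
    if "G1 \<in> upper_graph m k ` ?\<A>" "G2 \<in> upper_graph m k ` ?\<A>" "G2 \<subseteq> G1" "X \<noteq> {}" "X \<subseteq> {1..m}"
    for G1 G2 X
    using that contains_poly_line_of_glued_blocks[OF k _ _ _ _ _ _ b[unfolded D_def]] noline
    unfolding D_def by blast
  moreover have "upper_graph m k ` ?\<A> \<subseteq> graphs_on m"
    using upper_graph_in_graphs_on by blast
  ultimately show ?thesis
    by (simp add: HJ_code_iff)
qed

lemma card_line_free_fibre_le:
  fixes b :: "nat \<times> nat \<Rightarrow> nat" and m k :: nat
  defines "D \<equiv> block m k \<times> block m k"
  assumes k: "Suc k * m \<le> n" and noline: "\<not> contains_poly_line n A"
    and b: "b \<in> PiE (grid n - D) (\<lambda>_. {1, 2})"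
  shows "card {a \<in> PiE D (\<lambda>_. {1, 2}). symmetric_on D a \<and> glue D a b \<in> A}
    \<le> Delta_circ m * card {a \<in> PiE D (\<lambda>_. {1, 2::nat}). symmetric_on D a}"
    (is "real (card ?\<A>) \<le> _ * real (card ?Sym)")
proof -
  have bij: "bij_betw (upper_graph m k) ?Sym (graphs_on m)"
    unfolding D_def by (rule upper_graph_bij) (auto simp: upper_triangle_def)
  then have "inj_on (upper_graph m k) ?\<A>"
    unfolding bij_betw_def by (blast intro: inj_on_subset)
  then have "card ?\<A> = card (upper_graph m k ` ?\<A>)" by (simp add: card_image)
  also have "\<dots> \<le> Delta_circ m * card (graphs_on m)"
    using upper_graph_in_graphs_on HJ_code_fibre[OF k noline b[unfolded D_def]]
    unfolding D_def by (intro card_HJ_code_le) blast+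
  also have "card (graphs_on m) = card ?Sym"
    using bij by (simp add: bij_betw_same_card)
  finally show ?thesis .
qed

lemma card_line_free_first_sym_le:
  assumes k: "Suc k * m \<le> n" and noline: "\<not> contains_poly_line n A"
  shows "real (card (A \<inter> first_sym_words n m k)) \<le> Delta_circ m * real (card (first_sym_words n m k))"
proof -
  let ?D = "block m k \<times> block m k" and ?F = "\<lambda>_::nat \<times> nat. {1, 2::nat}"
  let ?Q = "\<lambda>b. \<forall>l<k. \<not> symmetric_on (block m l \<times> block m l) b"
  have DI: "grid n \<inter> ?D = ?D"
    using block_subset_atLeastAtMost[OF k] unfolding grid_def by auto
  show ?thesis
  proof (rule card_le_by_fibres[where I = "grid n" and F = ?F and D = ?D])
    show "A \<inter> first_sym_words n m k \<subseteq> PiE (grid n) ?F" "first_sym_words n m k \<subseteq> PiE (grid n) ?F"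
      unfolding first_sym_words_def nonsym_words_def W22_def by auto
    fix b assume b: "b \<in> PiE (grid n - ?D) ?F"
    have "{a \<in> PiE (grid n \<inter> ?D) ?F. glue ?D a b \<in> A \<inter> first_sym_words n m k}
        = (if ?Q b then {a \<in> PiE ?D ?F. symmetric_on ?D a \<and> glue ?D a b \<in> A} else {})"
      using glue_block_mem_iff(2)[OF k _ b] DI by auto
    moreover have "{a \<in> PiE (grid n \<inter> ?D) ?F. glue ?D a b \<in> first_sym_words n m k}
        = (if ?Q b then {a \<in> PiE ?D ?F. symmetric_on ?D a} else {})"
      using glue_block_mem_iff(2)[OF k _ b] DI by auto
    ultimately show "real (card {a \<in> PiE (grid n \<inter> ?D) ?F. glue ?D a b \<in> A \<inter> first_sym_words n m k})
      \<le> Delta_circ m * real (card {a \<in> PiE (grid n \<inter> ?D) ?F. glue ?D a b \<in> first_sym_words n m k})"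
      using card_line_free_fibre_le[OF k noline b] by simp
  qed (simp_all add: finite_grid)
qed

lemma card_nonsym_words_le:
  assumes "k * m \<le> n"
  shows "real (card (nonsym_words n m k)) \<le> (1 - 1 / 2 ^ (m * m)) ^ k * 2 ^ (n ^ 2)"
  using assms
proof (induction k)
  case 0
  have "nonsym_words n m 0 = W22 n" unfolding nonsym_words_def by simp
  then show ?case by (simp add: card_W22)
next
  case (Suc k)
  let ?N = "nonsym_words n m k" and ?T = "first_sym_words n m k"
  let ?q = "1 - 1 / 2 ^ (m * m) :: real"
  have "k * m \<le> n" using Suc.prems by simp
  have finN: "finite ?N" unfolding nonsym_words_def using finite_W22 by simp
  have TN: "?T \<subseteq> ?N" by (rule first_sym_words_subset)
  have "card (nonsym_words n m (Suc k)) = card ?N - card ?T"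
    unfolding nonsym_words_Suc using card_Diff_subset[OF finite_subset[OF TN finN] TN] .
  moreover have "card ?T \<le> card ?N" using finN TN by (rule card_mono)
  ultimately have "real (card (nonsym_words n m (Suc k))) = real (card ?N) - real (card ?T)"
    by simp
  also have "\<dots> \<le> ?q * real (card ?N)"
    using card_nonsym_words_le_first_sym[OF Suc.prems] by (simp add: field_simps)
  also have "\<dots> \<le> ?q * (?q ^ k * 2 ^ (n ^ 2))"
    by (rule mult_left_mono[OF Suc.IH[OF \<open>k * m \<le> n\<close>]]) simp
  finally show ?case by simp
qed

lemma card_line_free_diff_nonsym_le:
  assumes A: "A \<subseteq> W22 n" and noline: "\<not> contains_poly_line n A" and "k * m \<le> n"
  shows "real (card (A - nonsym_words n m k)) \<le> Delta_circ m * real (card (W22 n - nonsym_words n m k))"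
  using assms(3)
proof (induction k)
  case 0
  have "A - nonsym_words n m 0 = {}" "W22 n - nonsym_words n m 0 = {}"
    using A by (auto simp: nonsym_words_def)
  then show ?case by (simp only:) simp
next
  case (Suc k)
  let ?N = "nonsym_words n m k" and ?T = "first_sym_words n m k"
  have "k * m \<le> n" using Suc.prems by simp
  have TN: "?T \<subseteq> ?N" and NW: "?N \<subseteq> W22 n"
    using first_sym_words_subset unfolding nonsym_words_def by blast+
  have finA: "finite A" using A finite_W22 by (rule finite_subset)
  have "A - nonsym_words n m (Suc k) = (A - ?N) \<union> (A \<inter> ?T)"
    unfolding nonsym_words_Suc using TN by blast
  moreover have "card ((A - ?N) \<union> (A \<inter> ?T)) = card (A - ?N) + card (A \<inter> ?T)"
    using finA TN by (intro card_Un_disjoint) auto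
  ultimately have card_A: "card (A - nonsym_words n m (Suc k)) = card (A - ?N) + card (A \<inter> ?T)"
    by simp
  have "W22 n - nonsym_words n m (Suc k) = (W22 n - ?N) \<union> ?T"
    unfolding nonsym_words_Suc using TN NW by blast
  moreover have "card ((W22 n - ?N) \<union> ?T) = card (W22 n - ?N) + card ?T"
    using finite_W22 TN NW by (intro card_Un_disjoint) (auto intro: finite_subset)
  ultimately have card_W: "card (W22 n - nonsym_words n m (Suc k)) = card (W22 n - ?N) + card ?T"
    by simp
  have "real (card (A - ?N)) + real (card (A \<inter> ?T))
      \<le> Delta_circ m * real (card (W22 n - ?N)) + Delta_circ m * real (card ?T)"
    using Suc.IH[OF \<open>k * m \<le> n\<close>] card_line_free_first_sym_le[OF Suc.prems noline]
    by (rule add_mono)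
  then show ?case unfolding card_A card_W by (simp add: distrib_left)
qed

theorem card_line_free_le:
  assumes A: "A \<subseteq> W22 n" and noline: "\<not> contains_poly_line n A" and "t * m \<le> n"
  shows "real (card A) \<le> (Delta_circ m + (1 - 1 / 2 ^ (m * m)) ^ t) * 2 ^ (n ^ 2)"
proof -
  let ?N = "nonsym_words n m t"
  have "finite A" using A finite_W22 by (rule finite_subset)
  then have "card A \<le> card ((A - ?N) \<union> ?N)"
    by (intro card_mono) (auto simp: nonsym_words_def finite_W22)
  also have "\<dots> \<le> card (A - ?N) + card ?N" by (rule card_Un_le)
  finally have "real (card A) \<le> real (card (A - ?N)) + real (card ?N)"
    by (metis of_nat_add of_nat_le_iff)
  moreover have "card (W22 n - ?N) \<le> card (W22 n)"
    using finite_W22 by (rule card_mono) blast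
  then have "Delta_circ m * real (card (W22 n - ?N)) \<le> Delta_circ m * 2 ^ (n ^ 2)"
    using Delta_circ_nonneg by (intro mult_left_mono) (simp_all add: card_W22)
  moreover note card_line_free_diff_nonsym_le[OF A noline \<open>t * m \<le> n\<close>]
    card_nonsym_words_le[OF \<open>t * m \<le> n\<close>]
  ultimately show ?thesis unfolding distrib_right by linarith
qed

lemma Delta_circ_less_if_dense_sets_contain_lines:
  assumes "\<forall>A. A \<subseteq> W22 n \<and> real (card A) \<ge> \<delta> * 2 ^ (n ^ 2) \<longrightarrow> contains_poly_line n A"
  shows "Delta_circ n < \<delta>"
proof (rule ccontr)
  assume "\<not> Delta_circ n < \<delta>"
  then have "\<delta> * 2 ^ (n ^ 2) \<le> Delta_circ n * (2::real) ^ (n ^ 2)"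
    by (intro mult_right_mono) auto
  moreover obtain A where "A \<subseteq> W22 n" "\<not> contains_poly_line n A"
    "card A = Delta_circ n * 2 ^ (n ^ 2)"
    by (rule line_free_set_of_Delta_circ)
  ultimately show False using assms by auto
qed

lemma Delta_circ_plus_decay_small:
  assumes "Delta_circ \<longlonglongrightarrow> 0" "\<delta> > 0"
  obtains m t where "Delta_circ m + (1 - 1 / 2 ^ (m * m)) ^ t < \<delta>"
proof -
  from assms(2) have "\<delta> / 2 > 0" by simp
  from LIMSEQ_D[OF assms(1) this]
  obtain m where "\<forall>n\<ge>m. norm (Delta_circ n - 0) < \<delta> / 2" by blast
  then have m: "Delta_circ m < \<delta> / 2" by auto
  have "(\<lambda>t. (1 - 1 / 2 ^ (m * m) :: real) ^ t) \<longlonglongrightarrow> 0"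
    by (rule LIMSEQ_power_zero) simp
  from LIMSEQ_D[OF this \<open>\<delta> / 2 > 0\<close>]
  obtain t where "\<forall>n\<ge>t. norm ((1 - 1 / 2 ^ (m * m) :: real) ^ n - 0) < \<delta> / 2" by blast
  then have "(1 - 1 / 2 ^ (m * m) :: real) ^ t < \<delta> / 2" by auto
  with m show thesis by (intro that[of m t]) simp
qed

lemma dense_set_contains_poly_line:
  assumes "Delta_circ m + (1 - 1 / 2 ^ (m * m)) ^ t < \<delta>" "t * m \<le> n"
    and "A \<subseteq> W22 n" "real (card A) \<ge> \<delta> * 2 ^ (n ^ 2)"
  shows "contains_poly_line n A"
proof (rule ccontr)
  assume "\<not> contains_poly_line n A"
  then have "real (card A) \<le> (Delta_circ m + (1 - 1 / 2 ^ (m * m)) ^ t) * 2 ^ (n ^ 2)"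
    using assms(2,3) by (intro card_line_free_le)
  also have "\<dots> < \<delta> * 2 ^ (n ^ 2)"
    using assms(1) by simp
  finally show False using assms(4) by simp
qed

theorem propositionA1:
  shows "(\<forall>\<delta>::real. 0 < \<delta> \<and> \<delta> \<le> 1 \<longrightarrow>
            (\<exists>N::nat. N > 0 \<and> (\<forall>n\<ge>N. \<forall>A. A \<subseteq> W22 n \<and> real (card A) \<ge> \<delta> * 2 ^ (n ^ 2)
                 \<longrightarrow> contains_poly_line n A)))
         \<longleftrightarrow> (Delta_circ \<longlonglongrightarrow> 0)"
proof
  assume DPHJ: "\<forall>\<delta>::real. 0 < \<delta> \<and> \<delta> \<le> 1 \<longrightarrow>
    (\<exists>N::nat. N > 0 \<and> (\<forall>n\<ge>N. \<forall>A. A \<subseteq> W22 n \<and> real (card A) \<ge> \<delta> * 2 ^ (n ^ 2)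
       \<longrightarrow> contains_poly_line n A))"
  show "Delta_circ \<longlonglongrightarrow> 0"
  proof (rule LIMSEQ_I)
    fix r :: real assume "r > 0"
    then obtain N where "\<forall>n\<ge>N. \<forall>A. A \<subseteq> W22 n \<and> real (card A) \<ge> min r 1 * 2 ^ (n ^ 2)
        \<longrightarrow> contains_poly_line n A"
      using DPHJ[rule_format, of "min r 1"] by auto
    then have "Delta_circ n < min r 1" if "n \<ge> N" for n
      using that by (intro Delta_circ_less_if_dense_sets_contain_lines) blast
    then show "\<exists>N. \<forall>n\<ge>N. norm (Delta_circ n - 0) < r"
      using Delta_circ_nonneg by auto
  qed
next
  assume lim: "Delta_circ \<longlonglongrightarrow> 0"
  show "\<forall>\<delta>::real. 0 < \<delta> \<and> \<delta> \<le> 1 \<longrightarrow>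
    (\<exists>N::nat. N > 0 \<and> (\<forall>n\<ge>N. \<forall>A. A \<subseteq> W22 n \<and> real (card A) \<ge> \<delta> * 2 ^ (n ^ 2)
       \<longrightarrow> contains_poly_line n A))"
  proof (intro allI impI)
    fix \<delta> :: real assume "0 < \<delta> \<and> \<delta> \<le> 1"
    then obtain m t where "Delta_circ m + (1 - 1 / 2 ^ (m * m)) ^ t < \<delta>"
      using Delta_circ_plus_decay_small[OF lim] by blast
    then show "\<exists>N::nat. N > 0 \<and> (\<forall>n\<ge>N. \<forall>A. A \<subseteq> W22 n \<and> real (card A) \<ge> \<delta> * 2 ^ (n ^ 2)
        \<longrightarrow> contains_poly_line n A)"
      using dense_set_contains_poly_line by (intro exI[of _ "Suc (t * m)"]) auto
  qed
qed

end
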